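(* Let $k$ be a field of characteristic $0$. Let $f:R\to S$ be a homomorphism of commutative $k$-algebras which maps an ideal $I$ of $R$ isomorphically onto an ideal of $S$ (also denoted $I$). Assume that $S$ is locally a principal ideal ring (every localization of $S$ at a maximal ideal is a principal ideal ring) and that $S/I$ is finite-dimensional over $k$. Then the composite map $$HH_2(S/I)\xrightarrow{\ \partial\ } HH_1(S,I)\longrightarrow I\otimes_S\Omega_{S/R}$$ is surjective, where $\partial$ is the connecting homomorphism and the second map sends the class of $x\otimes r$ to $x\otimes dr$ and the class of $r\otimes x$ to $-x\otimes dr$ (for $x\in I$, $r\in S$).
   Context: Tensor products $\otimes$ without subscript are over $k$. For a commutative $k$-algebra $S$, the Hochschild complex $C_*(S)$ has $C_n(S)=S^{\otimes(n+1)}$ with the standard Hochschild boundary $b$ (in low degrees $b(x\otimes y)=xy-yx=0$ and $b(x\otimes y\otimes z)=xy\otimes z-x\otimes yz+zx\otimes y$); its homology is $HH_*(S)$. For an ideal $I$ of $S$, $C_*(S,I)$ is the kernel of the surjection $C_*(S)\to C_*(S/I)$ and $HH_*(S,I)$ is its homology; the short exact sequence $0\to C_*(S,I)\to C_*(S)\to C_*(S/I)\to 0$ gives the connecting map $\partial: HH_{n+1}(S/I)\to HH_n(S,I)$. Concretely $HH_1(S,I)$ is the quotient of $S\otimes I+I\otimes S\subseteq S\otimes S$ by the image under $b$ of $S\otimes S\otimes I+S\otimes I\otimes S+I\otimes S\otimes S$. $\Omega_{S/R}$ denotes the Kähler differentials of $S$ relative to $R$ (via $f$). *)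

theory Defs
  imports Main "HOL-Library.Poly_Mapping"
begin

(* Formal integer combinations ('x \<Rightarrow>\<^sub>0 int, i.e. free abelian groups, with
  frag_of / frag_extend from Poly_Mapping) are used to present tensor products
  and the Hochschild chain groups by generators and relations. *)

definition is_ideal :: "'a::comm_ring_1 set \<Rightarrow> bool" where
  "is_ideal A \<longleftrightarrow> 0 \<in> A \<and> (\<forall>a\<in>A. \<forall>b\<in>A. a + b \<in> A) \<and> (\<forall>r. \<forall>a\<in>A. r * a \<in> A)"

definition is_maximal_ideal :: "'a::comm_ring_1 set \<Rightarrow> bool" where
  "is_maximal_ideal M \<longleftrightarrow> is_ideal M \<and> M \<noteq> UNIV \<and>
     (\<forall>A. is_ideal A \<and> M \<subseteq> A \<longrightarrow> A = M \<or> A = UNIV)"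

definition is_ring_hom :: "('a::comm_ring_1 \<Rightarrow> 'b::comm_ring_1) \<Rightarrow> bool" where
  "is_ring_hom h \<longleftrightarrow> h 1 = 1 \<and> (\<forall>a b. h (a + b) = h a + h b) \<and> (\<forall>a b. h (a * b) = h a * h b)"

definition loc_eq :: "'a::comm_ring_1 set \<Rightarrow> 'a \<times> 'a \<Rightarrow> 'a \<times> 'a \<Rightarrow> bool" where
  "loc_eq m p q \<longleftrightarrow> (\<exists>u. u \<notin> m \<and> u * (fst p * snd q - fst q * snd p) = 0)"

(* An ideal of S_m, given as the (saturated) set of all fractions representing its elements. *)
definition loc_ideal :: "'a::comm_ring_1 set \<Rightarrow> ('a \<times> 'a) set \<Rightarrow> bool" where
  "loc_ideal m A \<longleftrightarrow>
     A \<subseteq> {p. snd p \<notin> m} \<and> (0, 1) \<in> A \<and>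
     (\<forall>p\<in>A. \<forall>q\<in>A. (fst p * snd q + fst q * snd p, snd p * snd q) \<in> A) \<and>
     (\<forall>p\<in>A. \<forall>c u. u \<notin> m \<longrightarrow> (c * fst p, u * snd p) \<in> A) \<and>
     (\<forall>p\<in>A. \<forall>q. snd q \<notin> m \<longrightarrow> loc_eq m p q \<longrightarrow> q \<in> A)"

definition loc_principal :: "'a::comm_ring_1 set \<Rightarrow> ('a \<times> 'a) set \<Rightarrow> bool" where
  "loc_principal m A \<longleftrightarrow> (\<exists>g v. v \<notin> m \<and>
     A = {q. snd q \<notin> m \<and> (\<exists>c u. u \<notin> m \<and> loc_eq m q (c * g, u * v))})"

definition locally_PIR :: "'a::comm_ring_1 itself \<Rightarrow> bool" where
  "locally_PIR _ \<longleftrightarrow> (\<forall>m::'a set. is_maximal_ideal m \<longrightarrow>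
     (\<forall>A. loc_ideal m A \<longrightarrow> loc_principal m A))"

inductive_set zspan :: "'a::ab_group_add set \<Rightarrow> 'a set" for G where
  zero: "0 \<in> zspan G"
| gen: "g \<in> G \<Longrightarrow> g \<in> zspan G"
| diff: "a \<in> zspan G \<Longrightarrow> b \<in> zspan G \<Longrightarrow> a - b \<in> zspan G"

(* Relations of S \<otimes>_k S on the free abelian group on S \<times> S, where the k-algebra
  structure of S is given by the ring homomorphism sigma :: 'k => 's. *)
definition tensor2_rels :: "('k \<Rightarrow> 's::comm_ring_1) \<Rightarrow> (('s \<times> 's) \<Rightarrow>\<^sub>0 int) set" where
  "tensor2_rels \<sigma> =
     {frag_of (x + x', y) - frag_of (x, y) - frag_of (x', y) | x x' y. True} \<union>
     {frag_of (x, y + y') - frag_of (x, y) - frag_of (x, y') | x y y'. True} \<union>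
     {frag_of (\<sigma> c * x, y) - frag_of (x, \<sigma> c * y) | c x y. True}"

definition quot_tensor2_rels :: "('k \<Rightarrow> 's::comm_ring_1) \<Rightarrow> 's set \<Rightarrow> (('s \<times> 's) \<Rightarrow>\<^sub>0 int) set" where
  "quot_tensor2_rels \<sigma> J = tensor2_rels \<sigma> \<union> {frag_of (x, y) | x y. x \<in> J \<or> y \<in> J}"

definition hoch_b2 :: "(('s::comm_ring_1 \<times> 's \<times> 's) \<Rightarrow>\<^sub>0 int) \<Rightarrow> (('s \<times> 's) \<Rightarrow>\<^sub>0 int)" where
  "hoch_b2 = frag_extend (\<lambda>(x, y, z). frag_of (x * y, z) - frag_of (x, y * z) + frag_of (z * x, y))"

(* Relations of J \<otimes>_S \<Omega>_{S/R} on the free abelian group on pairs (x, s), x \<in> J,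
  where (x, s) stands for x \<otimes> ds (every element of J \<otimes>_S \<Omega> is a sum of such;
  S-scalars are absorbed into the J-factor). *)
definition omega_tensor_rels :: "('r \<Rightarrow> 's::comm_ring_1) \<Rightarrow> 's set \<Rightarrow> (('s \<times> 's) \<Rightarrow>\<^sub>0 int) set" where
  "omega_tensor_rels f J =
     {frag_of (x + x', a) - frag_of (x, a) - frag_of (x', a) | x x' a. x \<in> J \<and> x' \<in> J} \<union>
     {frag_of (x, a + b) - frag_of (x, a) - frag_of (x, b) | x a b. x \<in> J} \<union>
     {frag_of (x, a * b) - frag_of (x * a, b) - frag_of (x * b, a) | x a b. x \<in> J} \<union>
     {frag_of (x, f r) | x r. x \<in> J}"

end

theory Submission
  imports Defs "HOL-Computational_Algebra.Polynomial"
begin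

text \<open>The image of the composite map is a subgroup of \<open>J \<otimes>\<^sub>S \<Omega>\<^sub>S\<^sub>/\<^sub>R\<close>, so it suffices to
  show that every \<open>x dy\<close> with \<open>x \<in> J\<close> lies in it. The \<open>u\<close> for which all \<open>x u h dy\<close> lie in
  the image form an ideal, so this can be checked locally at each maximal ideal \<open>m \<supseteq> J\<close>.
  There \<open>S\<^sub>m\<close> is a principal ideal ring, \<open>J\<^sub>m = (\<pi>\<^sup>d\<^sup>+\<^sup>1)\<close> for a local generator \<open>\<pi>\<close> of \<open>m\<close>,
  and the Hochschild 2-chains \<open>\<Sum>\<^sub>i a \<pi>\<^sup>i \<otimes> \<pi>\<^sup>d\<^sup>-\<^sup>i \<otimes> \<pi>\<close>, which are cycles modulo \<open>J\<close>, map
  to \<open>(d+1) a \<pi>\<^sup>d d\<pi> + \<pi>\<^sup>d\<^sup>+\<^sup>1 da\<close>. A downward induction then shows that \<open>\<pi>\<^sup>k S dS\<close> lies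
  locally in the image for \<open>k = 2d+2, \<dots>, d+1\<close>: dividing by integers (characteristic 0)
  handles \<open>\<pi>\<^sup>k S d\<pi>\<close>, and a polynomial \<open>q\<close> over \<open>k\<close> with \<open>q(y) \<in> m\<close> and \<open>q'(y) \<notin> m\<close>, which
  exists because \<open>S/J\<close> is finite-dimensional, reduces an arbitrary \<open>dy\<close> to such terms.\<close>

lemma is_ring_hom_simps:
  assumes "is_ring_hom h"
  shows "h 0 = 0" "h 1 = 1" "h (a + b) = h a + h b" "h (a * b) = h a * h b"
    "h (- a) = - h a" "h (a - b) = h a - h b"
proof -
  have add: "\<And>a b. h (a + b) = h a + h b"
    using assms unfolding is_ring_hom_def by blast
  then have zero: "h 0 = 0"
    using add[of 0 0] by simp
  then have uminus: "\<And>a. h (- a) = - h a"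
    using add by (metis add.right_inverse add_eq_0_iff)
  show "h 0 = 0" "h (a + b) = h a + h b" "h (- a) = - h a" by (fact zero add uminus)+
  show "h 1 = 1" "h (a * b) = h a * h b"
    using assms unfolding is_ring_hom_def by blast+
  show "h (a - b) = h a - h b"
    using add uminus by (metis diff_conv_add_uminus)
qed

section \<open>Ideals and maximal ideals\<close>

lemma ideal_0: "is_ideal A \<Longrightarrow> 0 \<in> A"
  by (simp add: is_ideal_def)

lemma ideal_add: "is_ideal A \<Longrightarrow> a \<in> A \<Longrightarrow> b \<in> A \<Longrightarrow> a + b \<in> A"
  by (simp add: is_ideal_def)

lemma ideal_mult_left: "is_ideal A \<Longrightarrow> a \<in> A \<Longrightarrow> r * a \<in> A"
  by (simp add: is_ideal_def)

lemma ideal_mult_right: "is_ideal A \<Longrightarrow> a \<in> A \<Longrightarrow> a * r \<in> A"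
  by (metis ideal_mult_left mult.commute)

lemma ideal_diff: "is_ideal A \<Longrightarrow> a \<in> A \<Longrightarrow> b \<in> A \<Longrightarrow> a - b \<in> A"
  using ideal_add[of A a "(- 1) * b"] ideal_mult_left[of A b "- 1"] by simp

lemma ideal_sum: "is_ideal A \<Longrightarrow> (\<And>i. i \<in> X \<Longrightarrow> g i \<in> A) \<Longrightarrow> sum g X \<in> A"
  by (induction X rule: infinite_finite_induct) (auto intro: ideal_0 ideal_add)

lemma ideal_power_add_mult:
  assumes "is_ideal A" "n ^ d \<in> A"
  shows "n ^ (d + k) * x \<in> A"
proof -
  have "n ^ d * (n ^ k * x) \<in> A"
    using assms by (rule ideal_mult_right)
  then show ?thesis
    by (simp only: power_add mult.assoc)
qed

lemma ideal_eq_UNIV_if_one_mem: "is_ideal A \<Longrightarrow> 1 \<in> A \<Longrightarrow> A = UNIV"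
  using ideal_mult_left[of A 1] by (metis UNIV_eq_I mult.right_neutral)

lemma ideal_adjoin:
  assumes A: "is_ideal A"
  shows "is_ideal {x + r * a | x r. x \<in> A}"
  unfolding is_ideal_def
proof (intro conjI ballI allI)
  show "0 \<in> {x + r * a | x r. x \<in> A}"
    using ideal_0[OF A] by (intro CollectI exI[of _ 0]) simp
next
  fix u v assume "u \<in> {x + r * a | x r. x \<in> A}" "v \<in> {x + r * a | x r. x \<in> A}"
  then obtain x r x' r' where "u = x + r * a" "v = x' + r' * a" "x \<in> A" "x' \<in> A"
    by blast
  then have "u + v = (x + x') + (r + r') * a" "x + x' \<in> A"
    using ideal_add[OF A] by (simp_all add: algebra_simps)
  then show "u + v \<in> {x + r * a | x r. x \<in> A}"
    by blast
next
  fix s u assume "u \<in> {x + r * a | x r. x \<in> A}"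
  then obtain x r where "u = x + r * a" "x \<in> A"
    by blast
  then have "s * u = s * x + (s * r) * a"
    by (simp add: algebra_simps)
  moreover have "s * x \<in> A"
    using ideal_mult_left[OF A \<open>x \<in> A\<close>] .
  ultimately show "s * u \<in> {x + r * a | x r. x \<in> A}"
    by blast
qed

lemma ideal_Union_chain:
  assumes "Ch \<noteq> {}" and "\<And>X. X \<in> Ch \<Longrightarrow> is_ideal X"
    and "\<And>X Y. X \<in> Ch \<Longrightarrow> Y \<in> Ch \<Longrightarrow> X \<subseteq> Y \<or> Y \<subseteq> X"
  shows "is_ideal (\<Union>Ch)"
  unfolding is_ideal_def
proof (intro conjI ballI allI)
  show "0 \<in> \<Union>Ch"
    using assms(1,2) ideal_0 by blast
next
  fix a b assume "a \<in> \<Union>Ch" "b \<in> \<Union>Ch"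
  then obtain X Y where "a \<in> X" "b \<in> Y" "X \<in> Ch" "Y \<in> Ch"
    by blast
  then show "a + b \<in> \<Union>Ch"
    using assms(2) assms(3)[of X Y] ideal_add by blast
next
  fix r a assume "a \<in> \<Union>Ch"
  then show "r * a \<in> \<Union>Ch"
    using assms(2) ideal_mult_left by blast
qed

lemma maximal_ideal_is_ideal: "is_maximal_ideal m \<Longrightarrow> is_ideal m"
  by (simp add: is_maximal_ideal_def)

lemma maximal_ideal_one_notin: "is_maximal_ideal m \<Longrightarrow> 1 \<notin> m"
  using ideal_eq_UNIV_if_one_mem unfolding is_maximal_ideal_def by blast

lemma maximal_ideal_mult_notin:
  assumes m: "is_maximal_ideal m" and a: "a \<notin> m" and b: "b \<notin> m"
  shows "a * b \<notin> m"
proof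
  assume ab: "a * b \<in> m"
  have im: "is_ideal m"
    using m by (rule maximal_ideal_is_ideal)
  let ?K = "{x + r * a | x r. x \<in> m}"
  have "x \<in> ?K" if "x \<in> m" for x
    using that by (intro CollectI exI[of _ x] exI[of _ 0]) simp
  then have "m \<subseteq> ?K"
    by blast
  moreover have "a \<in> ?K"
    using ideal_0[OF im] by (intro CollectI exI[of _ 0] exI[of _ 1]) simp
  moreover have "?K \<noteq> m"
    using a \<open>a \<in> ?K\<close> by blast
  ultimately have "?K = UNIV"
    using m ideal_adjoin[OF im] unfolding is_maximal_ideal_def by blast
  then obtain x r where x: "1 = x + r * a" "x \<in> m"
    using UNIV_I[of 1] by blast
  then have "x * b + r * (a * b) = b"
    by (metis mult.assoc mult_1 distrib_right)
  moreover have "x * b + r * (a * b) \<in> m"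
    using ideal_add[OF im ideal_mult_right[OF im x(2)] ideal_mult_left[OF im ab]] .
  ultimately show False
    using b by (simp only:)
qed

lemma maximal_ideal_prod_notin:
  "is_maximal_ideal m \<Longrightarrow> (\<And>i. i \<in> X \<Longrightarrow> g i \<notin> m) \<Longrightarrow> prod g X \<notin> m"
  by (induction X rule: infinite_finite_induct)
    (auto simp: maximal_ideal_one_notin maximal_ideal_mult_notin)

lemma maximal_ideal_power_notin: "is_maximal_ideal m \<Longrightarrow> w \<notin> m \<Longrightarrow> w ^ n \<notin> m"
  by (induction n) (simp_all add: maximal_ideal_one_notin maximal_ideal_mult_notin)

lemma exists_maximal_ideal:
  fixes A :: "'a::comm_ring_1 set"
  assumes A: "is_ideal A" "1 \<notin> A"
  shows "\<exists>m. is_maximal_ideal m \<and> A \<subseteq> m"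
proof -
  define C where "C = {K. is_ideal K \<and> A \<subseteq> K \<and> (1::'a) \<notin> K}"
  have "\<forall>Ch\<in>chains C. \<exists>U\<in>C. \<forall>X\<in>Ch. X \<subseteq> U"
  proof
    fix Ch assume Ch: "Ch \<in> chains C"
    show "\<exists>U\<in>C. \<forall>X\<in>Ch. X \<subseteq> U"
    proof (cases "Ch = {}")
      case True
      have "A \<in> C"
        using A unfolding C_def by simp
      with True show ?thesis
        by blast
    next
      case False
      have sub: "Ch \<subseteq> C" and lin: "\<And>X Y. X \<in> Ch \<Longrightarrow> Y \<in> Ch \<Longrightarrow> X \<subseteq> Y \<or> Y \<subseteq> X"
        using Ch unfolding chains_def chain_subset_def by auto
      have "is_ideal (\<Union>Ch)"
      proof (rule ideal_Union_chain[OF False])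
        show "is_ideal X" if "X \<in> Ch" for X
          using that sub unfolding C_def by auto
      qed (fact lin)
      moreover have "A \<subseteq> \<Union>Ch" "1 \<notin> \<Union>Ch"
        using False sub unfolding C_def by auto
      ultimately have "\<Union>Ch \<in> C"
        unfolding C_def by simp
      then show ?thesis
        by blast
    qed
  qed
  from Zorn_Lemma2[OF this] obtain M where M: "M \<in> C" "\<forall>X\<in>C. M \<subseteq> X \<longrightarrow> X = M"
    by blast
  have "is_maximal_ideal M"
    unfolding is_maximal_ideal_def
  proof (intro conjI allI impI)
    show "is_ideal M" "M \<noteq> UNIV"
      using M(1) unfolding C_def by auto
    fix K assume K: "is_ideal K \<and> M \<subseteq> K"
    show "K = M \<or> K = UNIV"
    proof (cases "1 \<in> K")
      case True
      then show ?thesis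
        using K ideal_eq_UNIV_if_one_mem by blast
    next
      case False
      then have "K \<in> C"
        using K M(1) unfolding C_def by auto
      then show ?thesis
        using K M(2) by blast
    qed
  qed
  moreover have "A \<subseteq> M"
    using M(1) unfolding C_def by simp
  ultimately show ?thesis
    by blast
qed

lemma one_mem_ideal_if_not_subset_maximal:
  fixes A :: "'a::comm_ring_1 set"
  shows "is_ideal A \<Longrightarrow> (\<And>m. is_maximal_ideal m \<Longrightarrow> \<not> A \<subseteq> m) \<Longrightarrow> 1 \<in> A"
  using exists_maximal_ideal by blast

section \<open>Localisation at a maximal ideal\<close>

lemma loc_ideal_of_maximal:
  assumes m: "is_maximal_ideal m"
  shows "loc_ideal m {p. snd p \<notin> m \<and> fst p \<in> m}"
  unfolding loc_ideal_def
proof (intro conjI ballI allI impI)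
  have im: "is_ideal m"
    using m by (rule maximal_ideal_is_ideal)
  show "{p. snd p \<notin> m \<and> fst p \<in> m} \<subseteq> {p. snd p \<notin> m}"
    by auto
  show "(0, 1) \<in> {p. snd p \<notin> m \<and> fst p \<in> m}"
    using maximal_ideal_one_notin[OF m] ideal_0[OF im] by simp
  fix p q
  show "p \<in> {p. snd p \<notin> m \<and> fst p \<in> m} \<Longrightarrow> q \<in> {p. snd p \<notin> m \<and> fst p \<in> m} \<Longrightarrow>
      (fst p * snd q + fst q * snd p, snd p * snd q) \<in> {p. snd p \<notin> m \<and> fst p \<in> m}"
    using im by (auto simp: maximal_ideal_mult_notin[OF m] intro: ideal_add ideal_mult_right)
  fix c u
  show "p \<in> {p. snd p \<notin> m \<and> fst p \<in> m} \<Longrightarrow> u \<notin> m \<Longrightarrow>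
      (c * fst p, u * snd p) \<in> {p. snd p \<notin> m \<and> fst p \<in> m}"
    using im by (auto simp: maximal_ideal_mult_notin[OF m] intro: ideal_mult_left)
next
  fix p q
  assume p: "p \<in> {p. snd p \<notin> m \<and> fst p \<in> m}" and q: "snd q \<notin> m" and "loc_eq m p q"
  then obtain u where u: "u \<notin> m" "u * (fst p * snd q - fst q * snd p) = 0"
    unfolding loc_eq_def by blast
  then have "(u * snd p) * fst q = u * fst p * snd q"
    by (simp add: algebra_simps)
  moreover have "u * fst p * snd q \<in> m"
    using p maximal_ideal_is_ideal[OF m] by (auto intro: ideal_mult_left ideal_mult_right)
  moreover have "u * snd p \<notin> m"
    using p u(1) maximal_ideal_mult_notin[OF m] by auto
  ultimately have "fst q \<in> m"
    using maximal_ideal_mult_notin[OF m] by metis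
  with q show "q \<in> {p. snd p \<notin> m \<and> fst p \<in> m}"
    by simp
qed

lemma locally_PIR_local_generator:
  fixes m :: "'a::comm_ring_1 set"
  assumes "locally_PIR TYPE('a)" and m: "is_maximal_ideal m"
  shows "\<exists>g\<in>m. \<forall>y\<in>m. \<exists>w c. w \<notin> m \<and> w * y = g * c"
proof -
  let ?A = "{p. snd p \<notin> m \<and> fst p \<in> m}"
  have "loc_principal m ?A"
    using assms loc_ideal_of_maximal[OF m] unfolding locally_PIR_def by blast
  then obtain g v where v: "v \<notin> m"
    and A: "?A = {q. snd q \<notin> m \<and> (\<exists>c u. u \<notin> m \<and> loc_eq m q (c * g, u * v))}"
    unfolding loc_principal_def by blast
  have "(g, v) \<in> ?A"
    unfolding A using v maximal_ideal_one_notin[OF m]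
    by (auto simp: loc_eq_def intro!: exI[of _ 1])
  then have "g \<in> m"
    by simp
  have "\<exists>w c. w \<notin> m \<and> w * y = g * c" if "y \<in> m" for y
  proof -
    have "(y, 1) \<in> ?A"
      using that maximal_ideal_one_notin[OF m] by simp
    then obtain c u u' where "u \<notin> m" "u' \<notin> m" "u' * (y * (u * v) - c * g * 1) = 0"
      unfolding A loc_eq_def by auto
    then have "(u' * u * v) * y = g * (u' * c)"
      by (simp add: algebra_simps)
    moreover have "u' * u * v \<notin> m"
      using maximal_ideal_mult_notin[OF m] \<open>u \<notin> m\<close> \<open>u' \<notin> m\<close> v by blast
    ultimately show ?thesis
      by blast
  qed
  with \<open>g \<in> m\<close> show ?thesis
    by blast
qed

text \<open>Let \<open>e\<close> be the least exponent with \<open>u * p ^ e \<in> J\<close> for some unit \<open>u\<close> of the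
  localisation; then \<open>e = Suc d\<close> and \<open>u * p\<close> is again a local generator of \<open>m\<close>, whose
  \<open>Suc d\<close>-th power already lies in \<open>J\<close>.\<close>

lemma local_uniformizer:
  assumes m: "is_maximal_ideal m" and J: "is_ideal J" and Jm: "J \<subseteq> m"
    and gen: "\<forall>y\<in>m. \<exists>w c. w \<notin> m \<and> w * y = p * c"
    and "\<exists>w k. w \<notin> m \<and> w * p ^ k \<in> J"
  shows "\<exists>\<pi> d. \<pi> ^ Suc d \<in> J \<and> (\<forall>w. w \<notin> m \<longrightarrow> w * \<pi> ^ d \<notin> J) \<and>
    (\<forall>y\<in>m. \<exists>w c. w \<notin> m \<and> w * y = \<pi> * c)"
proof -
  define e where "e = (LEAST e. \<exists>w. w \<notin> m \<and> w * p ^ e \<in> J)"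
  have "\<exists>e w. w \<notin> m \<and> w * p ^ e \<in> J"
    using assms(5) by blast
  then have e: "\<exists>w. w \<notin> m \<and> w * p ^ e \<in> J"
    unfolding e_def by (rule LeastI_ex)
  have emin: "\<And>e'. \<exists>w. w \<notin> m \<and> w * p ^ e' \<in> J \<Longrightarrow> e \<le> e'"
    unfolding e_def by (rule Least_le)
  have "e \<noteq> 0"
  proof
    assume "e = 0"
    with e obtain w where "w \<notin> m" "w \<in> J"
      by auto
    with Jm show False
      by blast
  qed
  then obtain d where d: "e = Suc d"
    using not0_implies_Suc by blast
  obtain u where u: "u \<notin> m" "u * p ^ Suc d \<in> J"
    using e d by blast
  have "(u * p) ^ Suc d \<in> J"
  proof -
    have "u ^ d * (u * p ^ Suc d) \<in> J"
      using J u(2) by (rule ideal_mult_left)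
    moreover have "u ^ d * (u * p ^ Suc d) = (u * p) ^ Suc d"
      by (simp add: power_mult_distrib ac_simps)
    ultimately show ?thesis
      by (simp only:)
  qed
  moreover have "w * (u * p) ^ d \<notin> J" if "w \<notin> m" for w
  proof -
    have "w * u ^ d \<notin> m"
      using that maximal_ideal_mult_notin[OF m] maximal_ideal_power_notin[OF m u(1)] by blast
    have "(w * u ^ d) * p ^ d \<notin> J"
    proof
      assume "(w * u ^ d) * p ^ d \<in> J"
      with \<open>w * u ^ d \<notin> m\<close> have "e \<le> d"
        by (intro emin) blast
      with d show False
        by simp
    qed
    moreover have "(w * u ^ d) * p ^ d = w * (u * p) ^ d"
      by (simp add: power_mult_distrib ac_simps)
    ultimately show ?thesis
      by argo
  qed
  moreover have "\<exists>w c. w \<notin> m \<and> w * y = (u * p) * c" if y: "y \<in> m" for y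
  proof -
    obtain w c where "w \<notin> m" "w * y = p * c"
      using gen y by blast
    have "(w * u) * y = u * (w * y)"
      by (simp only: mult.assoc mult.left_commute[of w u y])
    also have "\<dots> = (u * p) * c"
      by (simp only: \<open>w * y = p * c\<close> mult.assoc)
    finally have "(w * u) * y = (u * p) * c" .
    moreover have "w * u \<notin> m"
      using maximal_ideal_mult_notin[OF m \<open>w \<notin> m\<close> u(1)] .
    ultimately show ?thesis
      by (intro exI[of _ "w * u"] exI[of _ c] conjI)
  qed
  ultimately show ?thesis
    by (intro exI[of _ "u * p"] exI[of _ d]) blast
qed

lemma locally_divisible_by_power:
  assumes m: "is_maximal_ideal m" and J: "is_ideal J"
    and gen: "\<forall>y\<in>m. \<exists>w c. w \<notin> m \<and> w * y = \<pi> * c"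
    and dmin: "\<forall>w. w \<notin> m \<longrightarrow> w * \<pi> ^ d \<notin> J" and x: "x \<in> J"
  shows "\<exists>w c. w \<notin> m \<and> w * x = \<pi> ^ Suc d * c"
proof -
  have "\<exists>w c. w \<notin> m \<and> w * x = \<pi> ^ j * c" if "j \<le> Suc d" for j
    using that
  proof (induction j)
    case 0
    show ?case
      using maximal_ideal_one_notin[OF m] by (intro exI[of _ 1] exI[of _ x]) simp
  next
    case (Suc j)
    then obtain w c where wc: "w \<notin> m" "w * x = \<pi> ^ j * c"
      by auto
    have "c \<in> m"
    proof (rule ccontr)
      assume "c \<notin> m"
      have "c * \<pi> ^ d = (w * x) * \<pi> ^ (d - j)"
        using wc(2) Suc.prems by (simp add: power_add[symmetric] algebra_simps)
      also have "\<dots> \<in> J"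
        using x J by (intro ideal_mult_left ideal_mult_right)
      finally show False
        using dmin \<open>c \<notin> m\<close> by blast
    qed
    then obtain w' c' where w'c': "w' \<notin> m" "w' * c = \<pi> * c'"
      using gen by blast
    have "(w' * w) * x = \<pi> ^ j * (w' * c)"
      using wc(2) by (simp add: ac_simps)
    also have "\<dots> = \<pi> ^ Suc j * c'"
      using w'c'(2) by (simp add: ac_simps)
    finally have "(w' * w) * x = \<pi> ^ Suc j * c'" .
    moreover have "w' * w \<notin> m"
      using maximal_ideal_mult_notin[OF m w'c'(1) wc(1)] .
    ultimately show ?case
      by blast
  qed
  then show ?thesis
    by blast
qed

section \<open>Polynomials over \<open>k\<close> evaluated in \<open>S\<close>\<close>

locale k_algebra =
  fixes \<sigma> :: "'k::field_char_0 \<Rightarrow> 's::comm_ring_1"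
  assumes hom_sigma: "is_ring_hom \<sigma>"
begin

lemmas sigma_simps = is_ring_hom_simps[OF hom_sigma]

lemma sigma_of_nat: "\<sigma> (of_nat n) = of_nat n"
  by (induction n) (simp_all add: sigma_simps)

lemma sigma_inverse: "c \<noteq> 0 \<Longrightarrow> \<sigma> c * \<sigma> (inverse c) = 1"
  by (simp add: sigma_simps(4)[symmetric] sigma_simps(2))

lemma of_nat_mult_sigma_inverse: "of_nat (Suc n) * \<sigma> (inverse (of_nat (Suc n))) = 1"
proof -
  have "\<sigma> (of_nat (Suc n)) * \<sigma> (inverse (of_nat (Suc n))) = 1"
    by (rule sigma_inverse) (rule of_nat_neq_0)
  then show ?thesis
    by (simp only: sigma_of_nat)
qed

lemma sigma_notin_maximal:
  assumes c: "c \<noteq> 0" and m: "is_maximal_ideal m"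
  shows "\<sigma> c \<notin> m"
proof
  assume "\<sigma> c \<in> m"
  then have "\<sigma> c * \<sigma> (inverse c) \<in> m"
    by (rule ideal_mult_right[OF maximal_ideal_is_ideal[OF m]])
  then show False
    using sigma_inverse[OF c] maximal_ideal_one_notin[OF m] by simp
qed

sublocale kspace: vector_space "\<lambda>c v. \<sigma> c * v"
  by unfold_locales (simp_all add: sigma_simps algebra_simps)

definition kpoly :: "'k poly \<Rightarrow> 's \<Rightarrow> 's" where
  "kpoly p y = poly (map_poly \<sigma> p) y"

lemma kpoly_0 [simp]: "kpoly 0 y = 0"
  unfolding kpoly_def by simp

lemma kpoly_pCons: "kpoly (pCons a p) y = \<sigma> a + y * kpoly p y"
  unfolding kpoly_def by (simp add: map_poly_pCons sigma_simps)

lemma kpoly_add: "kpoly (p + q) y = kpoly p y + kpoly q y"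
proof -
  have "map_poly \<sigma> (p + q) = map_poly \<sigma> p + map_poly \<sigma> q"
    by (rule poly_eqI) (simp add: coeff_map_poly sigma_simps)
  then show ?thesis
    unfolding kpoly_def by simp
qed

lemma kpoly_monom: "kpoly (monom c n) y = \<sigma> c * y ^ n"
  unfolding kpoly_def by (simp add: map_poly_monom sigma_simps poly_monom)

lemma kpoly_sum: "kpoly (sum g A) y = (\<Sum>i\<in>A. kpoly (g i) y)"
  by (induction A rule: infinite_finite_induct) (simp_all add: kpoly_add)

lemma kpoly_pderiv_pCons: "kpoly (pderiv (pCons a p)) y = kpoly p y + y * kpoly (pderiv p) y"
  by (simp add: pderiv_pCons kpoly_add kpoly_pCons sigma_simps)

lemma kpoly_minus_const_coeff: "is_ideal m \<Longrightarrow> y \<in> m \<Longrightarrow> kpoly q y - \<sigma> (coeff q 0) \<in> m"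
  by (induction q rule: pCons_induct) (simp_all add: kpoly_pCons sigma_simps ideal_0 ideal_mult_right)

lemma kpoly_factor_power: "p \<noteq> 0 \<Longrightarrow> \<exists>k q. coeff q 0 \<noteq> 0 \<and> kpoly p y = y ^ k * kpoly q y"
proof (induction p rule: pCons_induct)
  case (pCons a p)
  show ?case
  proof (cases "a = 0")
    case False
    then show ?thesis
      by (intro exI[of _ 0] exI[of _ "pCons a p"]) simp
  next
    case True
    then obtain k q where "coeff q 0 \<noteq> 0" "kpoly p y = y ^ k * kpoly q y"
      using pCons by auto
    then show ?thesis
      using True by (intro exI[of _ "Suc k"] exI[of _ q]) (simp add: kpoly_pCons sigma_simps)
  qed
qed simp

lemma unit_multiple_of_power_in_ideal:
  assumes m: "is_maximal_ideal m" and y: "y \<in> m" and p: "p \<noteq> 0" "kpoly p y \<in> J"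
  shows "\<exists>w k. w \<notin> m \<and> w * y ^ k \<in> J"
proof -
  obtain k q where kq: "coeff q 0 \<noteq> 0" "kpoly p y = y ^ k * kpoly q y"
    using kpoly_factor_power[OF p(1)] by blast
  have im: "is_ideal m"
    using m by (rule maximal_ideal_is_ideal)
  have "kpoly q y \<notin> m"
  proof
    assume "kpoly q y \<in> m"
    then have "kpoly q y - (kpoly q y - \<sigma> (coeff q 0)) \<in> m"
      using kpoly_minus_const_coeff[OF im y] by (rule ideal_diff[OF im])
    then show False
      using sigma_notin_maximal[OF kq(1) m] by simp
  qed
  moreover have "kpoly q y * y ^ k \<in> J"
    using p(2) kq(2) by (simp add: mult.commute)
  ultimately show ?thesis
    by blast
qed

text \<open>Take a nonzero polynomial of least degree that vanishes at \<open>y\<close> modulo \<open>m\<close>: it is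
  nonconstant, so in characteristic 0 its derivative is nonzero and of smaller degree.\<close>

lemma exists_simple_root_mod_maximal:
  assumes m: "is_maximal_ideal m" and p: "p \<noteq> 0" "kpoly p y \<in> m"
  shows "\<exists>q. kpoly q y \<in> m \<and> kpoly (pderiv q) y \<notin> m"
proof -
  obtain q where q: "q \<noteq> 0" "kpoly q y \<in> m"
    and min: "\<And>r. r \<noteq> 0 \<and> kpoly r y \<in> m \<Longrightarrow> degree q \<le> degree r"
    using ex_has_least_nat[of "\<lambda>p. p \<noteq> 0 \<and> kpoly p y \<in> m" p degree] p by blast
  have "degree q \<noteq> 0"
  proof
    assume "degree q = 0"
    then have "q = [:coeff q 0:]"
      by (metis degree_eq_zeroE coeff_pCons_0)
    then have "kpoly q y = \<sigma> (coeff q 0)" "coeff q 0 \<noteq> 0"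
      using q(1) by (metis kpoly_pCons kpoly_0 mult_zero_right add.right_neutral, metis pCons_0_0)
    then show False
      using sigma_notin_maximal[OF _ m] q(2) by simp
  qed
  then have "pderiv q \<noteq> 0" "degree (pderiv q) < degree q"
    using pderiv_eq_0_iff[of q] degree_pderiv[of q] by auto
  then have "kpoly (pderiv q) y \<notin> m"
    using min[of "pderiv q"] by auto
  then show ?thesis
    using q by blast
qed

lemma dependent_family_in_finite_span:
  assumes B: "finite B" and w: "\<And>i. w i \<in> kspace.span B"
  shows "\<exists>a. (\<exists>i\<le>card B. a i \<noteq> 0) \<and> (\<Sum>i\<le>card B. \<sigma> (a i) * w i) = 0"
proof (cases "inj_on w {..card B}")
  case False
  then obtain i j where ij: "i \<le> card B" "j \<le> card B" "i \<noteq> j" "w i = w j"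
    unfolding inj_on_def by auto
  define a :: "nat \<Rightarrow> 'k" where "a l = (if l = i then 1 else if l = j then -1 else 0)" for l
  have "(\<Sum>l\<le>card B. \<sigma> (a l) * w l) = (\<Sum>l\<le>card B. (if l = i then w i else 0) - (if l = j then w j else 0))"
    using ij by (intro sum.cong) (auto simp: a_def sigma_simps)
  also have "\<dots> = 0"
    using ij by (simp add: sum_subtractf)
  finally show ?thesis
    using ij by (intro exI[of _ a]) (auto simp: a_def)
next
  case True
  let ?W = "w ` {..card B}"
  have "card ?W = Suc (card B)"
    using True by (simp add: card_image)
  moreover have "?W \<subseteq> kspace.span B"
    using w by auto
  ultimately have "kspace.dependent ?W"
    using kspace.independent_span_bound[OF B] by (metis Suc_n_not_le_n)
  then obtain t u where t: "finite t" "t \<subseteq> ?W" "(\<Sum>v\<in>t. \<sigma> (u v) * v) = 0"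
    and v0: "\<exists>v\<in>t. u v \<noteq> 0"
    unfolding kspace.dependent_explicit by blast
  define a where "a i = (if w i \<in> t then u (w i) else 0)" for i
  have "(\<Sum>i\<le>card B. \<sigma> (a i) * w i) = (\<Sum>i\<le>card B. if w i \<in> t then \<sigma> (u (w i)) * w i else 0)"
    by (rule sum.cong) (auto simp: a_def sigma_simps)
  also have "\<dots> = (\<Sum>i\<in>{i\<in>{..card B}. w i \<in> t}. \<sigma> (u (w i)) * w i)"
    by (rule sum.inter_filter[symmetric]) simp
  also have "\<dots> = (\<Sum>v\<in>w ` {i\<in>{..card B}. w i \<in> t}. \<sigma> (u v) * v)"
    using True by (subst sum.reindex) (auto intro: inj_on_subset)
  also have "w ` {i\<in>{..card B}. w i \<in> t} = t"
    using t(2) by auto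
  finally have "(\<Sum>i\<le>card B. \<sigma> (a i) * w i) = 0"
    using t(3) by simp
  moreover obtain i where "i \<le> card B" "w i \<in> t" "u (w i) \<noteq> 0"
    using v0 t(2) by blast
  ultimately show ?thesis
    by (intro exI[of _ a]) (auto simp: a_def)
qed

lemma algebraic_mod_ideal:
  assumes J: "is_ideal J"
    and fin: "\<exists>B. finite B \<and> (\<forall>s. \<exists>c. s - (\<Sum>b\<in>B. \<sigma> (c b) * b) \<in> J)"
  shows "\<exists>p. p \<noteq> 0 \<and> kpoly p y \<in> J"
proof -
  obtain B where B: "finite B" "\<And>s. \<exists>c. s - (\<Sum>b\<in>B. \<sigma> (c b) * b) \<in> J"
    using fin by blast
  have "\<exists>C. \<forall>i. y ^ i - (\<Sum>b\<in>B. \<sigma> (C i b) * b) \<in> J"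
    by (rule choice) (use B(2) in blast)
  then obtain C where C: "\<And>i. y ^ i - (\<Sum>b\<in>B. \<sigma> (C i b) * b) \<in> J"
    by blast
  define w where "w i = (\<Sum>b\<in>B. \<sigma> (C i b) * b)" for i
  have "w i \<in> kspace.span B" for i
    unfolding w_def by (intro kspace.span_sum kspace.span_scale kspace.span_base)
  then obtain a where a: "\<exists>i\<le>card B. a i \<noteq> 0" "(\<Sum>i\<le>card B. \<sigma> (a i) * w i) = 0"
    using dependent_family_in_finite_span[OF B(1)] by blast
  define p where "p = (\<Sum>i\<le>card B. monom (a i) i)"
  have "p \<noteq> 0"
  proof -
    obtain i where "i \<le> card B" "a i \<noteq> 0"
      using a(1) by blast
    moreover have "coeff p i = a i"
      unfolding p_def coeff_sum using \<open>i \<le> card B\<close> by (simp add: coeff_monom)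
    ultimately show ?thesis
      by auto
  qed
  moreover have "kpoly p y = (\<Sum>i\<le>card B. \<sigma> (a i) * (y ^ i - w i))"
    using a(2) by (simp add: p_def kpoly_sum kpoly_monom right_diff_distrib sum_subtractf)
  then have "kpoly p y \<in> J"
    using C J unfolding w_def by (simp add: ideal_sum ideal_mult_left)
  ultimately show ?thesis
    by blast
qed

end

section \<open>Generators and relations\<close>

lemma zspan_add: "a \<in> zspan G \<Longrightarrow> b \<in> zspan G \<Longrightarrow> a + b \<in> zspan G"
  using zspan.diff[of a G "0 - b"] zspan.diff[OF zspan.zero, of b G] by simp

lemma zspan_uminus: "a \<in> zspan G \<Longrightarrow> - a \<in> zspan G"
  using zspan.diff[OF zspan.zero, of a G] by simp

lemma zspan_cmul: "a \<in> zspan G \<Longrightarrow> frag_cmul k a \<in> zspan G"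
  by (rule frag_closure_minus_cmul[where P = "\<lambda>x. x \<in> zspan G"]) (auto intro: zspan.intros)

lemma hoch_b2_of:
  "hoch_b2 (frag_of (x, y, w)) = frag_of (x * y, w) - frag_of (x, y * w) + frag_of (w * x, y)"
  unfolding hoch_b2_def by simp

lemma hoch_b2_diff: "hoch_b2 (a - b) = hoch_b2 a - hoch_b2 b"
  unfolding hoch_b2_def by (rule frag_extend_diff)

lemma hoch_b2_sum: "finite A \<Longrightarrow> hoch_b2 (sum g A) = (\<Sum>i\<in>A. hoch_b2 (g i))"
  unfolding hoch_b2_def by (simp add: frag_extend_sum o_def)

lemma sum_lessThan_const_frag: "(\<Sum>i<n. (F :: 'a \<Rightarrow>\<^sub>0 int)) = frag_cmul (int n) F"
  by (induction n) (simp_all add: frag_cmul_distrib add.commute)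

locale relative_HH = k_algebra \<sigma>
  for \<sigma> :: "'k::field_char_0 \<Rightarrow> 's::comm_ring_1" +
  fixes f :: "'r::comm_ring_1 \<Rightarrow> 's" and J :: "'s set"
  assumes hom_f: "is_ring_hom f"
    and sigma_in_range: "\<And>c. \<sigma> c \<in> range f"
    and J_ideal: "is_ideal J"
    and J_in_range: "J \<subseteq> range f"
    and loc_PIR: "locally_PIR TYPE('s)"
    and fin_dim: "\<exists>B::'s set. finite B \<and> (\<forall>s. \<exists>c::'s \<Rightarrow> 'k. s - (\<Sum>b\<in>B. \<sigma> (c b) * b) \<in> J)"
begin

lemmas J_closed = ideal_add[OF J_ideal] ideal_mult_left[OF J_ideal] ideal_mult_right[OF J_ideal]

definition omega_equiv :: "(('s \<times> 's) \<Rightarrow>\<^sub>0 int) \<Rightarrow> (('s \<times> 's) \<Rightarrow>\<^sub>0 int) \<Rightarrow> bool" (infix "\<simeq>" 50)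
  where "a \<simeq> b \<longleftrightarrow> a - b \<in> zspan (omega_tensor_rels f J)"

lemma omega_equiv_refl [simp]: "a \<simeq> a"
  by (simp add: omega_equiv_def zspan.zero)

lemma omega_equiv_sym: "a \<simeq> b \<Longrightarrow> b \<simeq> a"
  unfolding omega_equiv_def by (drule zspan_uminus) simp

lemma omega_equiv_trans [trans]: "a \<simeq> b \<Longrightarrow> b \<simeq> c \<Longrightarrow> a \<simeq> c"
  unfolding omega_equiv_def by (drule (1) zspan_add) simp

lemma omega_equiv_add: "a \<simeq> b \<Longrightarrow> c \<simeq> d \<Longrightarrow> a + c \<simeq> b + d"
  unfolding omega_equiv_def using zspan_add[of "a - b" _ "c - d"] by (simp add: algebra_simps)

lemma omega_equiv_diff: "a \<simeq> b \<Longrightarrow> c \<simeq> d \<Longrightarrow> a - c \<simeq> b - d"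
  unfolding omega_equiv_def using zspan.diff[of "a - b" _ "c - d"] by (simp add: algebra_simps)

lemma omega_equiv_sum: "(\<And>i. i \<in> A \<Longrightarrow> g i \<simeq> h i) \<Longrightarrow> sum g A \<simeq> sum h A"
  by (induction A rule: infinite_finite_induct) (simp_all add: omega_equiv_add)

lemma omega_equiv_relation: "a - b \<in> omega_tensor_rels f J \<Longrightarrow> a \<simeq> b"
  by (simp add: omega_equiv_def zspan.gen)

lemma omega_add_left:
  "x \<in> J \<Longrightarrow> x' \<in> J \<Longrightarrow> frag_of (x + x', a) \<simeq> frag_of (x, a) + frag_of (x', a)"
  by (rule omega_equiv_relation) (unfold omega_tensor_rels_def diff_diff_eq[symmetric], blast)

lemma omega_add_right: "x \<in> J \<Longrightarrow> frag_of (x, a + b) \<simeq> frag_of (x, a) + frag_of (x, b)"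
  by (rule omega_equiv_relation) (unfold omega_tensor_rels_def diff_diff_eq[symmetric], blast)

lemma omega_leibniz: "x \<in> J \<Longrightarrow> frag_of (x, a * b) \<simeq> frag_of (x * a, b) + frag_of (x * b, a)"
  by (rule omega_equiv_relation) (unfold omega_tensor_rels_def diff_diff_eq[symmetric], blast)

lemma omega_d_range: "x \<in> J \<Longrightarrow> y \<in> range f \<Longrightarrow> frag_of (x, y) \<simeq> 0"
  by (rule omega_equiv_relation) (unfold omega_tensor_rels_def, auto)

lemma omega_d_ideal: "x \<in> J \<Longrightarrow> y \<in> J \<Longrightarrow> frag_of (x, y) \<simeq> 0"
  using omega_d_range J_in_range by blast

lemma omega_d_sigma: "x \<in> J \<Longrightarrow> frag_of (x, \<sigma> c) \<simeq> 0"
  using omega_d_range sigma_in_range by blast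

lemma omega_d_one: "x \<in> J \<Longrightarrow> frag_of (x, 1) \<simeq> 0"
  using omega_d_sigma[of x 1] by (simp add: sigma_simps)

lemma omega_zero_left: "frag_of (0, a) \<simeq> 0"
  using omega_equiv_sym[OF omega_add_left[OF ideal_0[OF J_ideal] ideal_0[OF J_ideal]]]
  by (simp add: omega_equiv_def)

lemma omega_ideal_product: "x \<in> J \<Longrightarrow> y \<in> J \<Longrightarrow> frag_of (x * y, a) \<simeq> 0"
proof -
  assume x: "x \<in> J" and y: "y \<in> J"
  have "0 \<simeq> frag_of (x, y * a)"
    using omega_d_ideal[OF x ideal_mult_right[OF J_ideal y]] by (rule omega_equiv_sym)
  also have "\<dots> \<simeq> frag_of (x * y, a) + frag_of (x * a, y)"
    using x by (rule omega_leibniz)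
  also have "\<dots> \<simeq> frag_of (x * y, a) + 0"
    using x y by (intro omega_equiv_add omega_equiv_refl omega_d_ideal J_closed)
  finally have "0 \<simeq> frag_of (x * y, a)"
    by simp
  then show ?thesis
    by (rule omega_equiv_sym)
qed

lemma omega_scalar: "x \<in> J \<Longrightarrow> frag_of (x, \<sigma> c * a) \<simeq> frag_of (x * \<sigma> c, a)"
proof -
  assume x: "x \<in> J"
  have "frag_of (x, \<sigma> c * a) \<simeq> frag_of (x * \<sigma> c, a) + frag_of (x * a, \<sigma> c)"
    using x by (rule omega_leibniz)
  also have "\<dots> \<simeq> frag_of (x * \<sigma> c, a) + 0"
    using x by (intro omega_equiv_add omega_equiv_refl omega_d_sigma J_closed)
  finally show ?thesis
    by simp
qed

lemma omega_of_nat: "x \<in> J \<Longrightarrow> frag_cmul (int n) (frag_of (x, a)) \<simeq> frag_of (of_nat n * x, a)"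
proof (induction n)
  case 0
  show ?case
    using omega_equiv_sym[OF omega_zero_left] by simp
next
  case (Suc n)
  have "frag_cmul (int (Suc n)) (frag_of (x, a)) = frag_cmul (int n) (frag_of (x, a)) + frag_of (x, a)"
    by (simp add: frag_cmul_distrib)
  also have "\<dots> \<simeq> frag_of (of_nat n * x, a) + frag_of (x, a)"
    using Suc by (intro omega_equiv_add omega_equiv_refl)
  also have "\<dots> \<simeq> frag_of (of_nat n * x + x, a)"
    using omega_add_left[OF ideal_mult_left[OF J_ideal Suc.prems] Suc.prems] by (rule omega_equiv_sym)
  finally show ?case
    by (simp add: algebra_simps)
qed

lemma omega_sum_right: "x \<in> J \<Longrightarrow> frag_of (x, sum g A) \<simeq> (\<Sum>i\<in>A. frag_of (x, g i))"
proof (induction A rule: infinite_finite_induct)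
  case (insert i A)
  have "frag_of (x, sum g (insert i A)) \<simeq> frag_of (x, g i) + frag_of (x, sum g A)"
    using insert by (simp add: omega_add_right)
  also have "\<dots> \<simeq> frag_of (x, g i) + (\<Sum>i\<in>A. frag_of (x, g i))"
    using insert by (intro omega_equiv_add omega_equiv_refl)
  finally show ?case
    using insert by simp
qed (simp_all add: omega_d_ideal ideal_0[OF J_ideal])

lemma omega_chain_rule: "x \<in> J \<Longrightarrow> frag_of (x, kpoly p y) \<simeq> frag_of (x * kpoly (pderiv p) y, y)"
proof (induction p arbitrary: x rule: pCons_induct)
  case 0
  show ?case
    using omega_equiv_trans[OF omega_d_ideal[OF 0 ideal_0[OF J_ideal]] omega_equiv_sym[OF omega_zero_left]]
    by simp
next
  case (pCons a p)
  let ?P = "kpoly p y" and ?P' = "kpoly (pderiv p) y"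
  have "frag_of (x, kpoly (pCons a p) y) \<simeq> frag_of (x, \<sigma> a) + frag_of (x, y * ?P)"
    using pCons.prems by (simp add: kpoly_pCons omega_add_right)
  also have "\<dots> \<simeq> 0 + (frag_of (x * y, ?P) + frag_of (x * ?P, y))"
    using pCons.prems by (intro omega_equiv_add omega_d_sigma omega_leibniz)
  also have "\<dots> \<simeq> 0 + (frag_of (x * y * ?P', y) + frag_of (x * ?P, y))"
    using pCons by (intro omega_equiv_add omega_equiv_refl pCons.IH J_closed)
  also have "\<dots> \<simeq> frag_of (x * y * ?P' + x * ?P, y)"
    using omega_equiv_sym[OF omega_add_left[of "x * y * ?P'" "x * ?P" y]] pCons.prems
    by (simp add: J_closed)
  finally show ?case
    by (simp add: kpoly_pderiv_pCons algebra_simps)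
qed

lemma omega_power:
  "x \<in> J \<Longrightarrow> frag_of (x, y ^ Suc n) \<simeq> frag_cmul (int (Suc n)) (frag_of (x * y ^ n, y))"
proof -
  assume x: "x \<in> J"
  have "frag_of (x, y ^ Suc n) = frag_of (x, kpoly (monom 1 (Suc n)) y)"
    by (simp add: kpoly_monom sigma_simps)
  also have "\<dots> \<simeq> frag_of (x * kpoly (pderiv (monom 1 (Suc n))) y, y)"
    using x by (rule omega_chain_rule)
  also have "\<dots> = frag_of (of_nat (Suc n) * (x * y ^ n), y)"
    by (simp add: pderiv_monom kpoly_monom sigma_of_nat algebra_simps del: of_nat_Suc)
  also have "\<dots> \<simeq> frag_cmul (int (Suc n)) (frag_of (x * y ^ n, y))"
    using omega_of_nat[OF ideal_mult_right[OF J_ideal x]] by (rule omega_equiv_sym)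
  finally show ?thesis .
qed

section \<open>The image of \<open>HH\<^sub>2(S/J)\<close>\<close>

text \<open>\<open>\<omega> \<in> hh_image\<close> says that the class of \<open>\<omega>\<close> in \<open>J \<otimes>\<^sub>S \<Omega>\<^sub>S\<^sub>/\<^sub>R\<close> comes from \<open>HH\<^sub>2(S/J)\<close>:
  \<open>z\<close> is a 2-chain that is a cycle modulo \<open>J\<close>, \<open>P + Q\<close> is its boundary written in
  \<open>C\<^sub>1(S, J) = J \<otimes> S + S \<otimes> J\<close>, and \<open>x \<otimes> r \<mapsto> x dr\<close>, \<open>r \<otimes> x \<mapsto> -x dr\<close> sends it to
  \<open>P - swap Q\<close>.\<close>

definition hh_image :: "(('s \<times> 's) \<Rightarrow>\<^sub>0 int) set" where
  "hh_image = {\<omega>. \<exists>z. hoch_b2 z \<in> zspan (quot_tensor2_rels \<sigma> J) \<and>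
     (\<exists>P Q. (\<forall>t\<in>Poly_Mapping.keys P. fst t \<in> J) \<and> (\<forall>t\<in>Poly_Mapping.keys Q. snd t \<in> J) \<and>
        hoch_b2 z - (P + Q) \<in> zspan (tensor2_rels \<sigma>) \<and>
        P - frag_extend (\<lambda>(r, x). frag_of (x, r)) Q \<simeq> \<omega>)}"

lemma hh_image_0: "0 \<in> hh_image"
  unfolding hh_image_def
  by (intro CollectI exI[of _ 0] conjI) (auto simp: hoch_b2_def intro: zspan.zero)

lemma hh_image_diff:
  assumes "a \<in> hh_image" "b \<in> hh_image"
  shows "a - b \<in> hh_image"
proof -
  obtain z1 P1 Q1 where 1: "hoch_b2 z1 \<in> zspan (quot_tensor2_rels \<sigma> J)"
      "\<forall>t\<in>Poly_Mapping.keys P1. fst t \<in> J" "\<forall>t\<in>Poly_Mapping.keys Q1. snd t \<in> J"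
      "hoch_b2 z1 - (P1 + Q1) \<in> zspan (tensor2_rels \<sigma>)"
      "P1 - frag_extend (\<lambda>(r, x). frag_of (x, r)) Q1 \<simeq> a"
    using assms(1) unfolding hh_image_def by blast
  obtain z2 P2 Q2 where 2: "hoch_b2 z2 \<in> zspan (quot_tensor2_rels \<sigma> J)"
      "\<forall>t\<in>Poly_Mapping.keys P2. fst t \<in> J" "\<forall>t\<in>Poly_Mapping.keys Q2. snd t \<in> J"
      "hoch_b2 z2 - (P2 + Q2) \<in> zspan (tensor2_rels \<sigma>)"
      "P2 - frag_extend (\<lambda>(r, x). frag_of (x, r)) Q2 \<simeq> b"
    using assms(2) unfolding hh_image_def by blast
  show ?thesis
    unfolding hh_image_def
  proof (intro CollectI exI conjI)
    show "hoch_b2 (z1 - z2) \<in> zspan (quot_tensor2_rels \<sigma> J)"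
      using 1(1) 2(1) by (simp add: hoch_b2_diff zspan.diff)
    show "\<forall>t\<in>Poly_Mapping.keys (P1 - P2). fst t \<in> J" "\<forall>t\<in>Poly_Mapping.keys (Q1 - Q2). snd t \<in> J"
      using 1(2,3) 2(2,3) keys_diff[of P1 P2] keys_diff[of Q1 Q2] by blast+
    have "hoch_b2 (z1 - z2) - (P1 - P2 + (Q1 - Q2)) = (hoch_b2 z1 - (P1 + Q1)) - (hoch_b2 z2 - (P2 + Q2))"
      by (simp add: hoch_b2_diff algebra_simps)
    then show "hoch_b2 (z1 - z2) - (P1 - P2 + (Q1 - Q2)) \<in> zspan (tensor2_rels \<sigma>)"
      using zspan.diff[OF 1(4) 2(4)] by (simp only:)
    have "P1 - P2 - frag_extend (\<lambda>(r, x). frag_of (x, r)) (Q1 - Q2) =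
        (P1 - frag_extend (\<lambda>(r, x). frag_of (x, r)) Q1) - (P2 - frag_extend (\<lambda>(r, x). frag_of (x, r)) Q2)"
      by (simp add: frag_extend_diff algebra_simps)
    then show "P1 - P2 - frag_extend (\<lambda>(r, x). frag_of (x, r)) (Q1 - Q2) \<simeq> a - b"
      using omega_equiv_diff[OF 1(5) 2(5)] by (simp only:)
  qed
qed

lemma hh_image_uminus: "a \<in> hh_image \<Longrightarrow> - a \<in> hh_image"
  using hh_image_diff[OF hh_image_0] by fastforce

lemma hh_image_add: "a \<in> hh_image \<Longrightarrow> b \<in> hh_image \<Longrightarrow> a + b \<in> hh_image"
  using hh_image_diff[OF _ hh_image_uminus] by fastforce

lemma hh_image_sum: "(\<And>i. i \<in> A \<Longrightarrow> g i \<in> hh_image) \<Longrightarrow> sum g A \<in> hh_image"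
  by (induction A rule: infinite_finite_induct) (auto intro: hh_image_0 hh_image_add)

lemma hh_image_omega_equiv:
  assumes "a \<in> hh_image" "a \<simeq> b"
  shows "b \<in> hh_image"
proof -
  obtain z P Q where "hoch_b2 z \<in> zspan (quot_tensor2_rels \<sigma> J)"
    "\<forall>t\<in>Poly_Mapping.keys P. fst t \<in> J" "\<forall>t\<in>Poly_Mapping.keys Q. snd t \<in> J"
    "hoch_b2 z - (P + Q) \<in> zspan (tensor2_rels \<sigma>)"
    and "P - frag_extend (\<lambda>(r, x). frag_of (x, r)) Q \<simeq> a"
    using assms(1) unfolding hh_image_def by blast
  moreover from this(5) have "P - frag_extend (\<lambda>(r, x). frag_of (x, r)) Q \<simeq> b"
    using assms(2) by (rule omega_equiv_trans)
  ultimately show ?thesis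
    unfolding hh_image_def by blast
qed

lemma hh_image_if_omega_equiv_0: "a \<simeq> 0 \<Longrightarrow> a \<in> hh_image"
  by (rule hh_image_omega_equiv[OF hh_image_0 omega_equiv_sym])

text \<open>The 2-chain \<open>\<Sum>\<^sub>i\<^sub>\<le>\<^sub>d a n\<^sup>i \<otimes> n\<^sup>d\<^sup>-\<^sup>i \<otimes> n\<close> has the telescoping boundary
  \<open>(d+1) (a n\<^sup>d \<otimes> n) + a n\<^sup>d\<^sup>+\<^sup>1 \<otimes> 1 - a \<otimes> n\<^sup>d\<^sup>+\<^sup>1\<close>, which vanishes modulo \<open>J\<close>.\<close>

lemma hh_image_power_cycle:
  assumes nJ: "n ^ Suc d \<in> J" and aJ: "a * n ^ d \<in> J"
  shows "frag_cmul (int (Suc d)) (frag_of (a * n ^ d, n)) + frag_of (n ^ Suc d, a) \<in> hh_image"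
proof -
  define z where "z = (\<Sum>i<Suc d. frag_of (a * n ^ i, n ^ (d - i), n))"
  define F where "F = frag_of (a * n ^ d, n)"
  define G where "G i = frag_of (a * n ^ i, n ^ (Suc d - i))" for i
  have boundary_term: "hoch_b2 (frag_of (a * n ^ i, n ^ (d - i), n)) = F - G i + G (Suc i)"
    if "i < Suc d" for i
  proof -
    have e1: "a * n ^ i * n ^ (d - i) = a * n ^ d"
      using that by (simp add: mult.assoc power_add[symmetric])
    have e2: "n ^ (d - i) * n = n ^ (Suc d - i)"
      using that by (metis Suc_diff_le less_Suc_eq_le power_Suc2)
    have e3: "n * (a * n ^ i) = a * n ^ Suc i"
      by (simp add: algebra_simps)
    show ?thesis
      unfolding hoch_b2_of F_def G_def e1 e2 e3 by simp
  qed
  have "hoch_b2 z = (\<Sum>i<Suc d. F - G i + G (Suc i))"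
    unfolding z_def hoch_b2_sum[OF finite_lessThan]
    by (intro sum.cong refl) (rule boundary_term, simp)
  also have "\<dots> = frag_cmul (int (Suc d)) F + (\<Sum>i<Suc d. G (Suc i) - G i)"
  proof -
    have "F - G i + G (Suc i) = F + (G (Suc i) - G i)" for i
      by simp
    then show ?thesis
      by (simp only: sum.distrib sum_lessThan_const_frag)
  qed
  also have "\<dots> = frag_cmul (int (Suc d)) F + G (Suc d) - G 0"
    by (simp only: sum_lessThan_telescope) (simp add: algebra_simps)
  finally have hz: "hoch_b2 z = frag_cmul (int (Suc d)) F + G (Suc d) - G 0" .
  have G0: "G 0 = frag_of (a, n ^ Suc d)" and GS: "G (Suc d) = frag_of (a * n ^ Suc d, 1)"
    unfolding G_def by simp_all
  have aJ': "a * n ^ Suc d \<in> J"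
    using nJ by (rule J_closed)
  have quot: "frag_of (x, y) \<in> zspan (quot_tensor2_rels \<sigma> J)" if "x \<in> J \<or> y \<in> J" for x y
    using that by (intro zspan.gen) (auto simp: quot_tensor2_rels_def)
  show ?thesis
    unfolding hh_image_def
  proof (intro CollectI exI conjI)
    show "hoch_b2 z \<in> zspan (quot_tensor2_rels \<sigma> J)"
      unfolding hz G0 GS F_def using aJ aJ' nJ
      by (intro zspan.diff zspan_add zspan_cmul quot) simp_all
    show "\<forall>t\<in>Poly_Mapping.keys (frag_cmul (int (Suc d)) F + G (Suc d)). fst t \<in> J"
      using keys_add[of "frag_cmul (int (Suc d)) F" "G (Suc d)"] aJ aJ'
      unfolding F_def GS by auto
    show "\<forall>t\<in>Poly_Mapping.keys (- G 0). snd t \<in> J"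
      unfolding G0 using nJ by simp
    show "hoch_b2 z - (frag_cmul (int (Suc d)) F + G (Suc d) + - G 0) \<in> zspan (tensor2_rels \<sigma>)"
      unfolding hz by (simp add: zspan.zero)
    have "frag_cmul (int (Suc d)) F + G (Suc d) - frag_extend (\<lambda>(r, x). frag_of (x, r)) (- G 0) =
        (frag_cmul (int (Suc d)) F + frag_of (n ^ Suc d, a)) + frag_of (a * n ^ Suc d, 1)"
      unfolding G0 GS by (simp add: frag_extend_minus algebra_simps)
    also have "\<dots> \<simeq> (frag_cmul (int (Suc d)) F + frag_of (n ^ Suc d, a)) + 0"
      using aJ' by (intro omega_equiv_add omega_equiv_refl omega_d_one)
    finally show "frag_cmul (int (Suc d)) F + G (Suc d) - frag_extend (\<lambda>(r, x). frag_of (x, r)) (- G 0)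
        \<simeq> frag_cmul (int (Suc d)) (frag_of (a * n ^ d, n)) + frag_of (n ^ Suc d, a)"
      unfolding F_def by simp
  qed
qed

section \<open>The local argument\<close>

text \<open>With \<open>u = v s\<close> and \<open>Z = n\<^sup>d\<^sup>+\<^sup>i\<^sup>+\<^sup>1 u s\<close>, the power cycle for \<open>a = n\<^sup>i\<^sup>+\<^sup>1 u s\<close> gives
  \<open>(d+1) Z dn + n\<^sup>d\<^sup>+\<^sup>1 d(n\<^sup>i\<^sup>+\<^sup>1 u s)\<close>; by Leibniz the second term is \<open>(i+1) Z dn\<close> plus
  \<open>n\<^sup>d\<^sup>+\<^sup>i\<^sup>+\<^sup>2 (u ds + s du)\<close>, which is covered by \<open>H\<close>.\<close>

lemma hh_image_power_multiple:
  assumes nJ: "n ^ Suc d \<in> J"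
    and H: "\<And>h y. frag_of (n ^ (Suc d + Suc i) * h * s, y) \<in> hh_image"
  shows "frag_cmul (int (Suc d + Suc i)) (frag_of (n ^ (Suc d + i) * (v * s * s), n)) \<in> hh_image"
proof -
  define N where "N = Suc d + Suc i"
  define u where "u = v * s"
  define Z where "Z = n ^ (Suc d + i) * (u * s)"
  note power_in_J = ideal_power_add_mult[OF J_ideal nJ]
  have ZJ: "Z \<in> J"
    unfolding Z_def by (rule power_in_J)
  have "n ^ Suc i * (u * s) * n ^ d = Z"
    unfolding Z_def by (simp add: power_add mult_ac)
  note cycle = hh_image_power_cycle[OF nJ, of "n ^ Suc i * (u * s)", unfolded this, OF ZJ]
  have "frag_of (n ^ Suc d, n ^ Suc i * (u * s)) \<simeq>
      frag_of (n ^ Suc d * n ^ Suc i, u * s) + frag_of (n ^ Suc d * (u * s), n ^ Suc i)"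
    using nJ by (rule omega_leibniz)
  also have "\<dots> \<simeq> frag_of (n ^ N, u * s) + frag_cmul (int (Suc i)) (frag_of (Z, n))"
  proof (intro omega_equiv_add)
    show "frag_of (n ^ Suc d * n ^ Suc i, u * s) \<simeq> frag_of (n ^ N, u * s)"
      by (simp only: N_def power_add omega_equiv_refl)
    have "n ^ Suc d * (u * s) * n ^ i = Z"
      unfolding Z_def by (simp add: power_add mult_ac)
    then show "frag_of (n ^ Suc d * (u * s), n ^ Suc i) \<simeq> frag_cmul (int (Suc i)) (frag_of (Z, n))"
      using omega_power[OF ideal_mult_right[OF J_ideal nJ], of "u * s" n i] by (simp only:)
  qed
  finally have "frag_cmul (int (Suc d)) (frag_of (Z, n)) + frag_of (n ^ Suc d, n ^ Suc i * (u * s)) \<simeq>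
      frag_cmul (int (Suc d)) (frag_of (Z, n)) + (frag_of (n ^ N, u * s) + frag_cmul (int (Suc i)) (frag_of (Z, n)))"
    by (rule omega_equiv_add[OF omega_equiv_refl])
  also have "\<dots> = frag_cmul (int N) (frag_of (Z, n)) + frag_of (n ^ N, u * s)"
    unfolding N_def by (simp only: of_nat_add frag_cmul_distrib ac_simps)
  finally have "frag_cmul (int (Suc d)) (frag_of (Z, n)) + frag_of (n ^ Suc d, n ^ Suc i * (u * s)) \<simeq>
      frag_cmul (int N) (frag_of (Z, n)) + frag_of (n ^ N, u * s)" .
  with cycle have "frag_cmul (int N) (frag_of (Z, n)) + frag_of (n ^ N, u * s) \<in> hh_image"
    by (rule hh_image_omega_equiv)
  moreover have "frag_of (n ^ N, u * s) \<in> hh_image"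
  proof -
    have "frag_of (n ^ N * u, s) \<in> hh_image"
      using H[of v s] unfolding u_def by (simp only: N_def mult.assoc)
    moreover have "frag_of (n ^ N * s, u) \<in> hh_image"
      using H[of 1 u] by (simp only: N_def mult_1_right)
    ultimately have "frag_of (n ^ N * u, s) + frag_of (n ^ N * s, u) \<in> hh_image"
      by (rule hh_image_add)
    moreover have "frag_of (n ^ N * u, s) + frag_of (n ^ N * s, u) \<simeq> frag_of (n ^ N, u * s)"
      using omega_equiv_sym[OF omega_leibniz[OF power_in_J[of "Suc i" 1]]]
      by (simp only: N_def mult_1_right)
    ultimately show ?thesis
      by (rule hh_image_omega_equiv)
  qed
  ultimately have "frag_cmul (int N) (frag_of (Z, n)) + frag_of (n ^ N, u * s) - frag_of (n ^ N, u * s)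
      \<in> hh_image"
    by (rule hh_image_diff)
  then show ?thesis
    unfolding N_def Z_def u_def by simp
qed

text \<open>Dividing by \<open>d + i + 2\<close> is where characteristic 0 enters.\<close>

lemma hh_image_power_differential:
  assumes nJ: "n ^ Suc d \<in> J"
    and H: "\<And>h y. frag_of (n ^ (Suc d + Suc i) * h * s, y) \<in> hh_image"
  shows "frag_of (n ^ (Suc d + i) * h * (s * s), n) \<in> hh_image"
proof -
  define N where "N = Suc d + Suc i"
  define c where "c = \<sigma> (inverse (of_nat N))"
  define Z where "Z = n ^ (Suc d + i) * (h * c * s * s)"
  have "frag_cmul (int N) (frag_of (Z, n)) \<in> hh_image"
    using hh_image_power_multiple[OF nJ H, of "h * c"] unfolding N_def Z_def .
  moreover have "frag_cmul (int N) (frag_of (Z, n)) \<simeq> frag_of (of_nat N * Z, n)"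
    unfolding Z_def by (rule omega_of_nat[OF ideal_power_add_mult[OF J_ideal nJ]])
  ultimately have "frag_of (of_nat N * Z, n) \<in> hh_image"
    by (rule hh_image_omega_equiv)
  moreover have "of_nat N * Z = n ^ (Suc d + i) * h * (s * s)"
  proof -
    have "of_nat N * c = 1"
      unfolding N_def c_def add_Suc by (rule of_nat_mult_sigma_inverse)
    moreover have "of_nat N * Z = (of_nat N * c) * (n ^ (Suc d + i) * h * (s * s))"
      unfolding Z_def by (simp only: mult_ac)
    ultimately show ?thesis
      by simp
  qed
  ultimately show ?thesis
    by simp
qed

text \<open>\<open>X w q'(y) dy = X w d(q(y)) = X d(n c) - X q(y) dw = X n dc + X c dn - X q(y) dw\<close>.\<close>

lemma hh_image_chain_rule:
  assumes XJ: "X \<in> J" and wq: "w * kpoly q y = n * c"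
    and "frag_of (X * n, c) \<in> hh_image" "frag_of (X * c, n) \<in> hh_image"
    and "frag_of (X * kpoly q y, w) \<in> hh_image"
  shows "frag_of (X * w * kpoly (pderiv q) y, y) \<in> hh_image"
proof -
  let ?g = "kpoly q y"
  have "frag_of (X * w * kpoly (pderiv q) y, y) \<simeq> frag_of (X * w, ?g)"
    using omega_chain_rule[OF ideal_mult_right[OF J_ideal XJ]] by (rule omega_equiv_sym)
  also have "\<dots> \<simeq> frag_of (X, w * ?g) - frag_of (X * ?g, w)"
    using omega_equiv_diff[OF omega_equiv_sym[OF omega_leibniz[OF XJ, of w ?g]] omega_equiv_refl,
        of "frag_of (X * ?g, w)"]
    by (simp only: add_diff_cancel)
  also have "\<dots> \<simeq> (frag_of (X * n, c) + frag_of (X * c, n)) - frag_of (X * ?g, w)"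
    unfolding wq using XJ by (intro omega_equiv_diff omega_leibniz omega_equiv_refl)
  finally have "(frag_of (X * n, c) + frag_of (X * c, n)) - frag_of (X * ?g, w) \<simeq>
      frag_of (X * w * kpoly (pderiv q) y, y)"
    by (rule omega_equiv_sym)
  moreover have "(frag_of (X * n, c) + frag_of (X * c, n)) - frag_of (X * ?g, w) \<in> hh_image"
    using assms(3-5) by (intro hh_image_diff hh_image_add)
  ultimately show ?thesis
    by (rule hh_image_omega_equiv[rotated])
qed

lemma hh_image_pointwise_descent:
  assumes m: "is_maximal_ideal m" and Jm: "J \<subseteq> m"
    and gen: "\<forall>y\<in>m. \<exists>w c. w \<notin> m \<and> w * y = n * c"
    and nJ: "n ^ Suc d \<in> J" and s: "s \<notin> m"
    and H: "\<And>h y. frag_of (n ^ (Suc d + Suc i) * h * s, y) \<in> hh_image"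
  shows "\<exists>s'. s' \<notin> m \<and> (\<forall>h. frag_of (n ^ (Suc d + i) * h * s', y) \<in> hh_image)"
proof -
  obtain p where "p \<noteq> 0" "kpoly p y \<in> J"
    using algebraic_mod_ideal[OF J_ideal fin_dim] by blast
  then obtain q where q: "kpoly q y \<in> m" "kpoly (pderiv q) y \<notin> m"
    using exists_simple_root_mod_maximal[OF m] Jm by blast
  obtain w c where wc: "w \<notin> m" "w * kpoly q y = n * c"
    using gen q(1) by blast
  have "frag_of (n ^ (Suc d + i) * h * (s * s * w * w * kpoly (pderiv q) y), y) \<in> hh_image" for h
  proof -
    define X where "X = n ^ (Suc d + i) * h * (s * s) * w"
    have XJ: "X \<in> J"
      using ideal_power_add_mult[OF J_ideal nJ, of i "h * (s * s) * w"] unfolding X_def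
      by (simp only: mult.assoc)
    have "frag_of (X * n, c) \<in> hh_image"
      using H[of "h * w * s" c] unfolding X_def by (simp add: power_add ac_simps)
    moreover have "frag_of (X * c, n) \<in> hh_image"
      using hh_image_power_differential[OF nJ H, of "h * w * c"] unfolding X_def by (simp add: ac_simps)
    moreover have "frag_of (X * kpoly q y, w) \<in> hh_image"
    proof -
      have "X * kpoly q y = n ^ (Suc d + i) * h * (s * s) * (w * kpoly q y)"
        unfolding X_def by (simp only: mult_ac)
      also have "\<dots> = n ^ (Suc d + Suc i) * (h * c * s) * s"
        unfolding wc(2) by (simp add: power_add mult_ac)
      finally show ?thesis
        using H by simp
    qed
    ultimately have "frag_of (X * w * kpoly (pderiv q) y, y) \<in> hh_image"
      by (rule hh_image_chain_rule[OF XJ wc(2)])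
    moreover have "X * w * kpoly (pderiv q) y = n ^ (Suc d + i) * h * (s * s * w * w * kpoly (pderiv q) y)"
      unfolding X_def by (simp add: ac_simps)
    ultimately show ?thesis
      by simp
  qed
  moreover have "s * s * w * w * kpoly (pderiv q) y \<notin> m"
    using s wc(1) q(2) by (simp add: maximal_ideal_mult_notin[OF m])
  ultimately show ?thesis
    by blast
qed

text \<open>The image contains \<open>X S\<^sub>m \<otimes> dS\<close> after localising at \<open>m\<close>.\<close>

definition locally_in_hh_image :: "'s set \<Rightarrow> 's \<Rightarrow> bool" where
  "locally_in_hh_image m X \<longleftrightarrow> (\<exists>s. s \<notin> m \<and> (\<forall>h y. frag_of (X * h * s, y) \<in> hh_image))"

text \<open>As \<open>S\<close> is spanned by \<open>B\<close> modulo \<open>J\<close>, only the finitely many \<open>y \<in> B\<close> matter, and the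
  product of their denominators serves for all \<open>y\<close>.\<close>

lemma locally_in_hh_image_if_pointwise:
  assumes m: "is_maximal_ideal m" and X: "X \<in> J"
    and H: "\<And>y. \<exists>s. s \<notin> m \<and> (\<forall>h. frag_of (X * h * s, y) \<in> hh_image)"
  shows "locally_in_hh_image m X"
proof -
  obtain B where B: "finite B" "\<And>s. \<exists>c. s - (\<Sum>b\<in>B. \<sigma> (c b) * b) \<in> J"
    using fin_dim by blast
  have "\<exists>S. \<forall>b. S b \<notin> m \<and> (\<forall>h. frag_of (X * h * S b, b) \<in> hh_image)"
    by (rule choice) (use H in blast)
  then obtain S where S: "\<And>b. S b \<notin> m" "\<And>b h. frag_of (X * h * S b, b) \<in> hh_image"
    by blast
  define s where "s = (\<Prod>b\<in>B. S b)"
  have "frag_of (X * h * s, y) \<in> hh_image" for h y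
  proof -
    obtain c where c: "y - (\<Sum>b\<in>B. \<sigma> (c b) * b) \<in> J"
      using B(2) by blast
    define x where "x = X * h * s"
    have xJ: "x \<in> J"
      unfolding x_def by (intro ideal_mult_right[OF J_ideal] X)
    have "frag_of (x, y) = frag_of (x, (\<Sum>b\<in>B. \<sigma> (c b) * b) + (y - (\<Sum>b\<in>B. \<sigma> (c b) * b)))"
      by simp
    also have "\<dots> \<simeq> frag_of (x, \<Sum>b\<in>B. \<sigma> (c b) * b) + frag_of (x, y - (\<Sum>b\<in>B. \<sigma> (c b) * b))"
      using xJ by (rule omega_add_right)
    also have "\<dots> \<simeq> (\<Sum>b\<in>B. frag_of (x, \<sigma> (c b) * b)) + 0"
      by (rule omega_equiv_add[OF omega_sum_right[OF xJ] omega_d_ideal[OF xJ c]])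
    also have "\<dots> \<simeq> (\<Sum>b\<in>B. frag_of (x * \<sigma> (c b), b)) + 0"
      by (intro omega_equiv_add omega_equiv_refl omega_equiv_sum omega_scalar[OF xJ])
    finally have "frag_of (x, y) \<simeq> (\<Sum>b\<in>B. frag_of (x * \<sigma> (c b), b))"
      by simp
    then have equiv: "(\<Sum>b\<in>B. frag_of (x * \<sigma> (c b), b)) \<simeq> frag_of (x, y)"
      by (rule omega_equiv_sym)
    have summands: "(\<Sum>b\<in>B. frag_of (x * \<sigma> (c b), b)) \<in> hh_image"
    proof (rule hh_image_sum)
      fix b assume "b \<in> B"
      then have "s = S b * (\<Prod>b'\<in>B - {b}. S b')"
        unfolding s_def using B(1) by (intro prod.remove)
      then have "x * \<sigma> (c b) = X * (h * \<sigma> (c b) * (\<Prod>b'\<in>B - {b}. S b')) * S b"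
        unfolding x_def by (simp only: mult_ac)
      then show "frag_of (x * \<sigma> (c b), b) \<in> hh_image"
        by (simp only: S(2))
    qed
    from summands equiv show ?thesis
      unfolding x_def by (rule hh_image_omega_equiv)
  qed
  moreover have "s \<notin> m"
    unfolding s_def by (rule maximal_ideal_prod_notin[OF m S(1)])
  ultimately show ?thesis
    unfolding locally_in_hh_image_def by blast
qed

lemma locally_in_hh_image_descent:
  assumes m: "is_maximal_ideal m" and Jm: "J \<subseteq> m"
    and gen: "\<forall>y\<in>m. \<exists>w c. w \<notin> m \<and> w * y = n * c" and nJ: "n ^ Suc d \<in> J"
    and "locally_in_hh_image m (n ^ (Suc d + Suc i))"
  shows "locally_in_hh_image m (n ^ (Suc d + i))"
proof -
  obtain s where "s \<notin> m" "\<And>h y. frag_of (n ^ (Suc d + Suc i) * h * s, y) \<in> hh_image"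
    using assms(5) unfolding locally_in_hh_image_def by blast
  then have "\<exists>s'. s' \<notin> m \<and> (\<forall>h. frag_of (n ^ (Suc d + i) * h * s', y) \<in> hh_image)" for y
    using hh_image_pointwise_descent[OF m Jm gen nJ] by blast
  moreover have "n ^ (Suc d + i) \<in> J"
    using ideal_power_add_mult[OF J_ideal nJ, of i 1] by simp
  ultimately show ?thesis
    using locally_in_hh_image_if_pointwise[OF m] by blast
qed

text \<open>Downward induction on the exponent, starting from \<open>n\<^sup>2\<^sup>d\<^sup>+\<^sup>2 \<in> J\<^sup>2\<close>, where all
  classes vanish.\<close>

lemma locally_in_hh_image_uniformizer_power:
  assumes m: "is_maximal_ideal m" and Jm: "J \<subseteq> m"
    and gen: "\<forall>y\<in>m. \<exists>w c. w \<notin> m \<and> w * y = n * c" and nJ: "n ^ Suc d \<in> J"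
  shows "locally_in_hh_image m (n ^ Suc d)"
proof -
  have "locally_in_hh_image m (n ^ (Suc d + (Suc d - k)))" if "k \<le> Suc d" for k
    using that
  proof (induction k)
    case 0
    have "frag_of (n ^ (Suc d + Suc d) * h * 1, y) \<in> hh_image" for h y
    proof -
      have "frag_of (n ^ Suc d * (n ^ Suc d * h), y) \<simeq> 0"
        using nJ by (intro omega_ideal_product J_closed)
      then show ?thesis
        by (simp add: hh_image_if_omega_equiv_0 power_add ac_simps)
    qed
    then show ?case
      unfolding locally_in_hh_image_def using maximal_ideal_one_notin[OF m] by auto
  next
    case (Suc k)
    have "Suc d - k = Suc (Suc d - Suc k)"
      using Suc.prems by simp
    with Suc.IH Suc.prems have "locally_in_hh_image m (n ^ (Suc d + Suc (Suc d - Suc k)))"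
      by simp
    then show ?case
      by (rule locally_in_hh_image_descent[OF m Jm gen nJ])
  qed
  from this[of "Suc d"] show ?thesis
    by simp
qed

lemma locally_in_hh_image_multiple:
  assumes m: "is_maximal_ideal m" and "locally_in_hh_image m X" and "w \<notin> m" and "w * x = X * c"
  shows "locally_in_hh_image m x"
proof -
  obtain s where s: "s \<notin> m" "\<And>h y. frag_of (X * h * s, y) \<in> hh_image"
    using assms(2) unfolding locally_in_hh_image_def by blast
  have "x * h * (w * s) = X * (c * h) * s" for h
  proof -
    have "x * h * (w * s) = (w * x) * h * s"
      by (simp add: ac_simps)
    also have "\<dots> = X * (c * h) * s"
      by (simp only: assms(4) mult.assoc)
    finally show ?thesis .
  qed
  then have "frag_of (x * h * (w * s), y) \<in> hh_image" for h y
    using s(2) by simp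
  moreover have "w * s \<notin> m"
    using maximal_ideal_mult_notin[OF m assms(3) s(1)] .
  ultimately show ?thesis
    unfolding locally_in_hh_image_def by blast
qed

lemma locally_in_hh_image_ideal:
  assumes m: "is_maximal_ideal m" and x: "x \<in> J"
  shows "locally_in_hh_image m x"
proof (cases "J \<subseteq> m")
  case True
  obtain p where p: "p \<in> m" and gen_p: "\<forall>y\<in>m. \<exists>w c. w \<notin> m \<and> w * y = p * c"
    using locally_PIR_local_generator[OF loc_PIR m] by blast
  obtain P where "P \<noteq> 0" "kpoly P p \<in> J"
    using algebraic_mod_ideal[OF J_ideal fin_dim] by blast
  then have "\<exists>w k. w \<notin> m \<and> w * p ^ k \<in> J"
    by (rule unit_multiple_of_power_in_ideal[OF m p])
  then obtain \<pi> d where \<pi>: "\<pi> ^ Suc d \<in> J" "\<forall>w. w \<notin> m \<longrightarrow> w * \<pi> ^ d \<notin> J"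
    and gen: "\<forall>y\<in>m. \<exists>w c. w \<notin> m \<and> w * y = \<pi> * c"
    using local_uniformizer[OF m J_ideal True gen_p] by blast
  obtain w c where "w \<notin> m" "w * x = \<pi> ^ Suc d * c"
    using locally_divisible_by_power[OF m J_ideal gen \<pi>(2) x] by blast
  with locally_in_hh_image_uniformizer_power[OF m True gen \<pi>(1)] show ?thesis
    by (rule locally_in_hh_image_multiple[OF m])
next
  case False
  then obtain j where j: "j \<in> J" "j \<notin> m"
    by blast
  have "frag_of (x * h * j, y) \<in> hh_image" for h y
    using omega_ideal_product[OF ideal_mult_right[OF J_ideal x] j(1)]
    by (rule hh_image_if_omega_equiv_0)
  with j(2) show ?thesis
    unfolding locally_in_hh_image_def by blast
qed

lemma hh_image_multipliers_ideal:
  assumes x: "x \<in> J"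
  shows "is_ideal {u. \<forall>h y. frag_of (x * h * u, y) \<in> hh_image}" (is "is_ideal ?A")
  unfolding is_ideal_def
proof (intro conjI ballI allI)
  show "0 \<in> ?A"
    using omega_zero_left by (simp add: hh_image_if_omega_equiv_0)
next
  fix a b assume "a \<in> ?A" "b \<in> ?A"
  have "frag_of (x * h * (a + b), y) \<in> hh_image" for h y
  proof -
    have "frag_of (x * h * a, y) + frag_of (x * h * b, y) \<in> hh_image"
      using \<open>a \<in> ?A\<close> \<open>b \<in> ?A\<close> by (simp add: hh_image_add)
    moreover have "frag_of (x * h * a, y) + frag_of (x * h * b, y) \<simeq> frag_of (x * h * a + x * h * b, y)"
      using x by (intro omega_equiv_sym[OF omega_add_left]) (simp_all add: J_closed)
    ultimately have "frag_of (x * h * a + x * h * b, y) \<in> hh_image"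
      by (rule hh_image_omega_equiv)
    then show ?thesis
      by (simp add: distrib_left)
  qed
  then show "a + b \<in> ?A"
    by blast
next
  fix r a assume "a \<in> ?A"
  have "frag_of (x * h * (r * a), y) \<in> hh_image" for h y
  proof -
    have "frag_of (x * (h * r) * a, y) \<in> hh_image"
      using \<open>a \<in> ?A\<close> by blast
    moreover have "x * (h * r) * a = x * h * (r * a)"
      by (simp only: mult.assoc)
    ultimately show ?thesis
      by (simp only:)
  qed
  then show "r * a \<in> ?A"
    by blast
qed

lemma frag_of_in_hh_image:
  assumes x: "x \<in> J"
  shows "frag_of (x, y) \<in> hh_image"
proof -
  let ?A = "{u. \<forall>h y. frag_of (x * h * u, y) \<in> hh_image}"
  have "\<not> ?A \<subseteq> m" if "is_maximal_ideal m" for m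
    using locally_in_hh_image_ideal[OF that x] unfolding locally_in_hh_image_def by blast
  with hh_image_multipliers_ideal[OF x] have "1 \<in> ?A"
    by (rule one_mem_ideal_if_not_subset_maximal)
  then have "frag_of (x * 1 * 1, y) \<in> hh_image"
    by blast
  then show ?thesis
    by simp
qed

lemma hh_image_if_keys_in_ideal:
  assumes "\<forall>t\<in>Poly_Mapping.keys \<omega>. fst t \<in> J"
  shows "\<omega> \<in> hh_image"
proof -
  have "Poly_Mapping.keys \<omega> \<subseteq> {t. fst t \<in> J}"
    using assms by auto
  then show ?thesis
  proof (induction \<omega> rule: frag_induction)
    case (one t)
    then show ?case
      using frag_of_in_hh_image[of "fst t" "snd t"] by simp
  qed (auto intro: hh_image_0 hh_image_diff)
qed

end

theorem theorem1p2:
  fixes \<rho> :: "'k::field_char_0 \<Rightarrow> 'r::comm_ring_1"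
    and \<sigma> :: "'k \<Rightarrow> 's::comm_ring_1"
    and f :: "'r \<Rightarrow> 's"
    and I :: "'r set"
  assumes hom_rho: "is_ring_hom \<rho>"
    and hom_sigma: "is_ring_hom \<sigma>"
    and hom_f: "is_ring_hom f"
    and f_k_linear: "\<And>c. f (\<rho> c) = \<sigma> c"
    and I_ideal: "is_ideal I"
    and f_inj_I: "inj_on f I"
    and fI_ideal: "is_ideal (f ` I)"
    and loc_PIR: "locally_PIR TYPE('s)"
    and fin_dim: "\<exists>B::'s set. finite B \<and>
                    (\<forall>s. \<exists>c::'s \<Rightarrow> 'k. s - (\<Sum>b\<in>B. \<sigma> (c b) * b) \<in> f ` I)"
  shows "\<forall>\<omega> :: ('s \<times> 's) \<Rightarrow>\<^sub>0 int. (\<forall>t\<in>Poly_Mapping.keys \<omega>. fst t \<in> f ` I) \<longrightarrow>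
           (\<exists>z :: ('s \<times> 's \<times> 's) \<Rightarrow>\<^sub>0 int.
              hoch_b2 z \<in> zspan (quot_tensor2_rels \<sigma> (f ` I)) \<and>
              (\<exists>P Q :: ('s \<times> 's) \<Rightarrow>\<^sub>0 int.
                 (\<forall>t\<in>Poly_Mapping.keys P. fst t \<in> f ` I) \<and> (\<forall>t\<in>Poly_Mapping.keys Q. snd t \<in> f ` I) \<and>
                 hoch_b2 z - (P + Q) \<in> zspan (tensor2_rels \<sigma>) \<and>
                 (P - frag_extend (\<lambda>(r, x). frag_of (x, r)) Q) - \<omega>
                   \<in> zspan (omega_tensor_rels f (f ` I))))"
proof -
  interpret relative_HH \<sigma> f "f ` I"
  proof
    show "is_ring_hom \<sigma>" "is_ring_hom f" "is_ideal (f ` I)" "locally_PIR TYPE('s)"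
      by fact+
    show "\<sigma> c \<in> range f" for c
      using f_k_linear by (metis rangeI)
    show "f ` I \<subseteq> range f"
      by blast
  qed (fact fin_dim)
  have "\<forall>\<omega>. (\<forall>t\<in>Poly_Mapping.keys \<omega>. fst t \<in> f ` I) \<longrightarrow> \<omega> \<in> hh_image"
    using hh_image_if_keys_in_ideal by blast
  then show ?thesis
    unfolding hh_image_def omega_equiv_def mem_Collect_eq .
qed

end
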